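(* Let $V>0$. Then $\mathcal{C}(V,T,\bar P)\subseteq\hat{\mathcal{C}}(\bar P)$ for every $T>0$, and as $T\to\infty$ the capacity region $\mathcal{C}(V,T,\bar P)$ tends to $\hat{\mathcal{C}}(\bar P)=\{(r_1,r_2): r_1+r_2\le\log_2(1+\bar P\beta_0/H^2),\ r_1,r_2\ge0\}$, i.e. $\mathcal{C}(V,\infty,\bar P)=\hat{\mathcal{C}}(\bar P)$: every point of $\hat{\mathcal{C}}(\bar P)$ is the limit as $T\to\infty$ of rate pairs in $\mathcal{C}(V,T,\bar P)$. Moreover, this limit is achieved by hover-fly-hover (HFH) trajectories with $x_{\rm I}=-D/2$ and $x_{\rm F}=D/2$ combined with TDMA-based transmission; that is, TDMA is capacity-achieving in this limit.
   Context: Fix $D>0$, $H>0$, $\beta_0>0$, $\bar P>0$. Ground users GU 1, GU 2 are at $x_1=-D/2$, $x_2=D/2$; for UAV horizontal position $x$ (altitude $H$), $h_k(x)=\beta_0/((x-x_k)^2+H^2)$. For $T>0$, $V\ge0$: a feasible trajectory is $x:[0,T]\to\mathbb{R}$ with $|\dot x(t)|\le V$; a feasible power allocation is measurable $p_1,p_2\ge0$ with $p_1(t)+p_2(t)\le\bar P$. $\mathcal{C}(x,p)$ is the set of $(r_1,r_2)$, $r_1,r_2\ge0$, with $r_1\le\frac1T\int_0^T\log_2(1+p_1h_1(x))dt$, $r_2\le\frac1T\int_0^T\log_2(1+p_2h_2(x))dt$, $r_1+r_2\le\frac1T\int_0^T\log_2(1+p_1h_1(x)+p_2h_2(x))dt$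 (arguments $t$ suppressed). $\mathcal{C}(V,T,\bar P)$ is the union of $\mathcal{C}(x,p)$ over feasible $x,p$. An HFH trajectory with parameters $-D/2\le x_{\rm I}\le x_{\rm F}\le D/2$, $t_{\rm I},t_{\rm F}\ge0$, $t_{\rm I}+(x_{\rm F}-x_{\rm I})/V+t_{\rm F}=T$, is $x(t)=x_{\rm I}$ for $t\in[0,t_{\rm I}]$, $x(t)=x_{\rm I}+(t-t_{\rm I})V$ for $t\in(t_{\rm I},T-t_{\rm F})$, $x(t)=x_{\rm F}$ for $t\in[T-t_{\rm F},T]$. TDMA-based transmission means that at each time at most one user is served with power $\bar P$, i.e. $(p_1(t),p_2(t))\in\{(\bar P,0),(0,\bar P),(0,0)\}$. *)

theory Defs
  imports "HOL-Analysis.Analysis"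
begin

definition gu_pos :: "real \<Rightarrow> nat \<Rightarrow> real" where
  "gu_pos D k = (if k = 1 then - D / 2 else D / 2)"

definition gain :: "real \<Rightarrow> real \<Rightarrow> real \<Rightarrow> nat \<Rightarrow> real \<Rightarrow> real" where
  "gain beta0 H D k x = beta0 / ((x - gu_pos D k)^2 + H^2)"

definition feasible_traj :: "real \<Rightarrow> real \<Rightarrow> (real \<Rightarrow> real) \<Rightarrow> bool" where
  "feasible_traj V T x \<longleftrightarrow>
     (\<forall>s\<in>{0..T}. \<forall>t\<in>{0..T}. \<bar>x t - x s\<bar> \<le> V * \<bar>t - s\<bar>)"

definition feasible_power :: "real \<Rightarrow> real \<Rightarrow> (real \<Rightarrow> real) \<Rightarrow> (real \<Rightarrow> real) \<Rightarrow> bool" where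
  "feasible_power Pbar T p1 p2 \<longleftrightarrow>
     p1 \<in> borel_measurable lborel \<and> p2 \<in> borel_measurable lborel \<and>
     (\<forall>t\<in>{0..T}. 0 \<le> p1 t \<and> 0 \<le> p2 t \<and> p1 t + p2 t \<le> Pbar)"

definition rate_region ::
  "real \<Rightarrow> real \<Rightarrow> real \<Rightarrow> real \<Rightarrow> (real \<Rightarrow> real) \<Rightarrow> (real \<Rightarrow> real) \<Rightarrow> (real \<Rightarrow> real)
   \<Rightarrow> (real \<times> real) set" where
  "rate_region beta0 H D T x p1 p2 =
     {(r1, r2). 0 \<le> r1 \<and> 0 \<le> r2 \<and>
        r1 \<le> (1 / T) * (LINT t:{0..T}|lborel. log 2 (1 + p1 t * gain beta0 H D 1 (x t))) \<and>
        r2 \<le> (1 / T) * (LINT t:{0..T}|lborel. log 2 (1 + p2 t * gain beta0 H D 2 (x t))) \<and>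
        r1 + r2 \<le> (1 / T) * (LINT t:{0..T}|lborel.
           log 2 (1 + p1 t * gain beta0 H D 1 (x t) + p2 t * gain beta0 H D 2 (x t)))}"

definition cap_region :: "real \<Rightarrow> real \<Rightarrow> real \<Rightarrow> real \<Rightarrow> real \<Rightarrow> real \<Rightarrow> (real \<times> real) set" where
  "cap_region beta0 H D V T Pbar =
     \<Union> {rate_region beta0 H D T x p1 p2 | x p1 p2.
           feasible_traj V T x \<and> feasible_power Pbar T p1 p2}"

definition cap_hat :: "real \<Rightarrow> real \<Rightarrow> real \<Rightarrow> (real \<times> real) set" where
  "cap_hat beta0 H Pbar =
     {(r1, r2). 0 \<le> r1 \<and> 0 \<le> r2 \<and> r1 + r2 \<le> log 2 (1 + Pbar * beta0 / H^2)}"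

definition is_HFH :: "real \<Rightarrow> real \<Rightarrow> real \<Rightarrow> real \<Rightarrow> real \<Rightarrow> real \<Rightarrow> real \<Rightarrow> (real \<Rightarrow> real) \<Rightarrow> bool" where
  "is_HFH D V T xI xF tI tF x \<longleftrightarrow>
     - D / 2 \<le> xI \<and> xI \<le> xF \<and> xF \<le> D / 2 \<and> 0 \<le> tI \<and> 0 \<le> tF \<and>
     tI + (xF - xI) / V + tF = T \<and>
     (\<forall>t\<in>{0..T}. x t = (if t \<le> tI then xI
                          else if t < T - tF then xI + (t - tI) * V
                          else xF))"

definition is_TDMA :: "real \<Rightarrow> real \<Rightarrow> (real \<Rightarrow> real) \<Rightarrow> (real \<Rightarrow> real) \<Rightarrow> bool" where
  "is_TDMA Pbar T p1 p2 \<longleftrightarrow>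
     (\<forall>t\<in>{0..T}. (p1 t, p2 t) \<in> {(Pbar, 0), (0, Pbar), (0, 0)})"

end

theory Submission
  imports Defs
begin

text \<open>Every channel gain is at most the line-of-sight gain beta0/H^2, so no power allocation
  along any trajectory beats a sum rate of log2(1 + Pbar beta0/H^2); this is the converse.
  Conversely, the UAV can hover above GU 1 for a fraction lam of the time serving it alone,
  fly across in time D/V, and hover above GU 2 for the rest of the time serving it alone.
  Both users then see the line-of-sight gain while served, so the TDMA rates are
  (1 - D/(V T)) (C lam, C (1 - lam)) with C the line-of-sight capacity, and the lost fraction
  D/(V T) of flying time vanishes as T grows.\<close>

lemma gain_nonneg: "0 \<le> beta0 \<Longrightarrow> 0 \<le> gain beta0 H D k y"
  unfolding gain_def by simp

lemma gain_le:
  assumes "H \<noteq> 0" "0 \<le> beta0"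
  shows "gain beta0 H D k y \<le> beta0 / H^2"
  unfolding gain_def using assms
  by (intro divide_left_mono) (auto intro!: mult_pos_pos add_nonneg_pos)

lemma gain_at_user: "gain beta0 H D k (gu_pos D k) = beta0 / H^2"
  unfolding gain_def by simp

lemma sum_rate_le:
  assumes "H \<noteq> 0" "0 \<le> beta0" "0 \<le> p1" "0 \<le> p2" "p1 + p2 \<le> Pbar"
  shows "log 2 (1 + p1 * gain beta0 H D k1 y1 + p2 * gain beta0 H D k2 y2)
           \<le> log 2 (1 + Pbar * beta0 / H^2)"
proof -
  have "p1 * gain beta0 H D k1 y1 + p2 * gain beta0 H D k2 y2 \<le> p1 * (beta0 / H^2) + p2 * (beta0 / H^2)"
    using assms gain_le[OF assms(1,2)] by (intro add_mono mult_left_mono) auto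
  also have "\<dots> = (p1 + p2) * (beta0 / H^2)"
    by (simp only: distrib_right)
  also have "\<dots> \<le> Pbar * (beta0 / H^2)"
    using assms by (intro mult_right_mono) auto
  finally have "p1 * gain beta0 H D k1 y1 + p2 * gain beta0 H D k2 y2 \<le> Pbar * (beta0 / H^2)" .
  moreover have "0 \<le> p1 * gain beta0 H D k1 y1 + p2 * gain beta0 H D k2 y2"
    using assms gain_nonneg[OF assms(2)] by simp
  ultimately show ?thesis
    by (subst log_le_cancel_iff) auto
qed

lemma set_integral_le_const:
  fixes f :: "real \<Rightarrow> real"
  assumes "0 \<le> T" "0 \<le> c" "\<forall>t\<in>{0..T}. f t \<le> c"
  shows "(LINT t:{0..T}|lborel. f t) \<le> c * T"
proof (cases "set_integrable lborel {0..T} f")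
  case True
  have "(LINT t:{0..T}|lborel. f t) \<le> (LINT t:{0..T}|lborel. c)"
  proof (rule set_integral_mono)
    show "set_integrable lborel {0..T} (\<lambda>t. c)"
      unfolding set_integrable_def using assms by (simp add: integrable_real_indicator)
  qed (use True assms in auto)
  also have "\<dots> = c * T" using assms by (simp add: set_integral_const)
  finally show ?thesis .
next
  case False
  then have "(LINT t:{0..T}|lborel. f t) = 0"
    unfolding set_lebesgue_integral_def set_integrable_def
    by (rule not_integrable_integral_eq)
  then show ?thesis using assms by simp
qed

lemma set_integral_supported:
  fixes f g :: "real \<Rightarrow> real"
  assumes "\<forall>t\<in>S. f t = g t" "\<forall>t. t \<notin> S \<longrightarrow> g t = 0"
  shows "(LINT t:S|lborel. f t) = integral\<^sup>L lborel g"
  unfolding set_lebesgue_integral_def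
  by (rule Bochner_Integration.integral_cong) (use assms in \<open>auto simp: indicator_def\<close>)

definition hfh_path :: "real \<Rightarrow> real \<Rightarrow> real \<Rightarrow> real \<Rightarrow> real \<Rightarrow> real" where
  "hfh_path xI xF V tI t = max xI (min xF (xI + (t - tI) * V))"

lemma hfh_path_before:
  assumes "0 \<le> V" "xI \<le> xF" "t \<le> tI"
  shows "hfh_path xI xF V tI t = xI"
proof -
  have "(t - tI) * V \<le> 0" using assms by (simp add: mult_nonpos_nonneg)
  then show ?thesis unfolding hfh_path_def using assms(2) by simp
qed

lemma hfh_path_after:
  assumes "0 < V" "xI \<le> xF" "tI + (xF - xI) / V \<le> t"
  shows "hfh_path xI xF V tI t = xF"
proof -
  have "xF - xI \<le> (t - tI) * V" using assms by (simp add: field_simps)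
  then show ?thesis unfolding hfh_path_def using assms(2) by simp
qed

lemma feasible_traj_hfh_path:
  assumes "xI \<le> xF" "0 \<le> V"
  shows "feasible_traj V T (hfh_path xI xF V tI)"
  unfolding feasible_traj_def
proof (intro ballI)
  fix s t :: real
  have "\<bar>hfh_path xI xF V tI t - hfh_path xI xF V tI s\<bar> \<le> \<bar>(t - tI) * V - (s - tI) * V\<bar>"
    unfolding hfh_path_def using assms(1) by (auto simp: max_def min_def abs_if)
  also have "\<dots> = V * \<bar>t - s\<bar>"
    using assms(2) by (simp add: abs_mult flip: left_diff_distrib)
  finally show "\<bar>hfh_path xI xF V tI t - hfh_path xI xF V tI s\<bar> \<le> V * \<bar>t - s\<bar>" .
qed

lemma is_HFH_hfh_path:
  assumes "0 < V" "- D / 2 \<le> xI" "xI \<le> xF" "xF \<le> D / 2" "0 \<le> tI" "0 \<le> tF"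
    and T: "tI + (xF - xI) / V + tF = T"
  shows "is_HFH D V T xI xF tI tF (hfh_path xI xF V tI)"
proof -
  have "hfh_path xI xF V tI t = (if t \<le> tI then xI
                                 else if t < T - tF then xI + (t - tI) * V else xF)" for t
  proof -
    have "(t - tI) * V \<le> 0 \<longleftrightarrow> t \<le> tI"
      using \<open>0 < V\<close> by (simp add: mult_le_0_iff)
    moreover have "xI + (t - tI) * V < xF \<longleftrightarrow> t < T - tF"
      using \<open>0 < V\<close> by (simp flip: T add: field_simps)
    ultimately show ?thesis
      unfolding hfh_path_def using \<open>xI \<le> xF\<close> by (auto simp: max_def min_def)
  qed
  then show ?thesis
    unfolding is_HFH_def using assms by simp
qed

lemma feasible_power_indicator_schedule:
  assumes "0 \<le> Pbar" "A \<inter> B = {}" "A \<in> sets borel" "B \<in> sets borel"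
  shows "feasible_power Pbar T (\<lambda>t. Pbar * indicator A t) (\<lambda>t. Pbar * indicator B t)"
  unfolding feasible_power_def using assms by (auto simp: indicator_def)

lemma is_TDMA_indicator_schedule:
  assumes "A \<inter> B = {}"
  shows "is_TDMA Pbar T (\<lambda>t. Pbar * indicator A t) (\<lambda>t. Pbar * indicator B t)"
  unfolding is_TDMA_def using assms by (auto simp: indicator_def)

lemma rate_region_mono:
  assumes "(a, b) \<in> rate_region beta0 H D T x p1 p2"
    and "0 \<le> a'" "a' \<le> a" "0 \<le> b'" "b' \<le> b"
  shows "(a', b') \<in> rate_region beta0 H D T x p1 p2"
  using assms unfolding rate_region_def by auto

lemma cap_region_subset_cap_hat:
  assumes "H \<noteq> 0" "0 \<le> beta0" "0 \<le> Pbar" "0 < T"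
  shows "cap_region beta0 H D V T Pbar \<subseteq> cap_hat beta0 H Pbar"
proof
  fix r assume "r \<in> cap_region beta0 H D V T Pbar"
  then obtain x p1 p2 where fp: "feasible_power Pbar T p1 p2"
    and rr: "r \<in> rate_region beta0 H D T x p1 p2"
    unfolding cap_region_def by blast
  obtain r1 r2 where r: "r = (r1, r2)" by fastforce
  define C where "C = log 2 (1 + Pbar * beta0 / H^2)"
  have "0 \<le> Pbar * beta0 / H^2" using assms by simp
  then have "0 \<le> C" unfolding C_def by simp
  then have "(LINT t:{0..T}|lborel.
      log 2 (1 + p1 t * gain beta0 H D 1 (x t) + p2 t * gain beta0 H D 2 (x t))) \<le> C * T"
    using fp assms unfolding C_def feasible_power_def
    by (intro set_integral_le_const) (auto intro!: sum_rate_le)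
  moreover have "0 \<le> r1" "0 \<le> r2" and "r1 + r2 \<le> (1 / T) * (LINT t:{0..T}|lborel.
      log 2 (1 + p1 t * gain beta0 H D 1 (x t) + p2 t * gain beta0 H D 2 (x t)))"
    using rr unfolding r rate_region_def by auto
  ultimately have "T * (r1 + r2) \<le> T * C"
    using \<open>0 < T\<close> by (simp add: field_simps)
  then have "r1 + r2 \<le> C"
    using \<open>0 < T\<close> by simp
  then show "r \<in> cap_hat beta0 H Pbar"
    unfolding r cap_hat_def C_def using \<open>0 \<le> r1\<close> \<open>0 \<le> r2\<close> by simp
qed

lemma hover_tdma_rates:
  fixes Pbar beta0 H :: real
  defines "C \<equiv> log 2 (1 + Pbar * beta0 / H^2)"
  assumes "0 \<le> beta0" "0 \<le> Pbar" "0 \<le> tI" "tI < T - tF" "0 \<le> tF"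
    and above_1: "\<And>t. t \<le> tI \<Longrightarrow> x t = gu_pos D 1"
    and above_2: "\<And>t. T - tF \<le> t \<Longrightarrow> x t = gu_pos D 2"
  shows "(1 / T * (C * tI), 1 / T * (C * tF))
           \<in> rate_region beta0 H D T x (\<lambda>t. Pbar * indicator {0..tI} t)
                (\<lambda>t. Pbar * indicator {T - tF..T} t)"
proof -
  have C_eq: "log 2 (1 + Pbar * gain beta0 H D k (gu_pos D k)) = C" for k
    unfolding C_def gain_at_user by simp
  have rate1: "(LINT t:{0..T}|lborel.
      log 2 (1 + Pbar * indicator {0..tI} t * gain beta0 H D 1 (x t))) = C * tI"
  proof -
    have "(LINT t:{0..T}|lborel. log 2 (1 + Pbar * indicator {0..tI} t * gain beta0 H D 1 (x t)))
        = integral\<^sup>L lborel (\<lambda>t. C * indicator {0..tI} t)"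
      using assms by (intro set_integral_supported) (auto simp: indicator_def above_1 C_eq)
    then show ?thesis using assms by simp
  qed
  have rate2: "(LINT t:{0..T}|lborel.
      log 2 (1 + Pbar * indicator {T - tF..T} t * gain beta0 H D 2 (x t))) = C * tF"
  proof -
    have "(LINT t:{0..T}|lborel. log 2 (1 + Pbar * indicator {T - tF..T} t * gain beta0 H D 2 (x t)))
        = integral\<^sup>L lborel (\<lambda>t. C * indicator {T - tF..T} t)"
      using assms by (intro set_integral_supported) (auto simp: indicator_def above_2 C_eq)
    then show ?thesis using assms by simp
  qed
  have sum_rate: "(LINT t:{0..T}|lborel. log 2 (1 + Pbar * indicator {0..tI} t * gain beta0 H D 1 (x t)
      + Pbar * indicator {T - tF..T} t * gain beta0 H D 2 (x t))) = C * tI + C * tF"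
  proof -
    have "(LINT t:{0..T}|lborel. log 2 (1 + Pbar * indicator {0..tI} t * gain beta0 H D 1 (x t)
          + Pbar * indicator {T - tF..T} t * gain beta0 H D 2 (x t)))
        = integral\<^sup>L lborel (\<lambda>t. C * indicator {0..tI} t + C * indicator {T - tF..T} t)"
      using assms
      by (intro set_integral_supported) (auto simp: indicator_def above_1 above_2 C_eq)
    then show ?thesis using assms by (simp add: Bochner_Integration.integral_add)
  qed
  have "0 \<le> Pbar * beta0 / H^2" using assms by simp
  then have "0 \<le> C" unfolding C_def by simp
  then show ?thesis
    unfolding rate_region_def rate1 rate2 sum_rate
    using assms by (simp add: distrib_left)
qed

lemma hfh_tdma_rates:
  fixes D H beta0 Pbar V T lam :: real
  defines "C \<equiv> log 2 (1 + Pbar * beta0 / H^2)"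
  assumes "0 < D" "0 < V" "0 \<le> beta0" "0 \<le> Pbar" "D / V < T" "0 \<le> lam" "lam \<le> 1"
  shows "\<exists>x p1 p2 tI tF.
           is_HFH D V T (- D / 2) (D / 2) tI tF x \<and> feasible_traj V T x \<and>
           feasible_power Pbar T p1 p2 \<and> is_TDMA Pbar T p1 p2 \<and>
           ((1 - D / (V * T)) * (C * lam), (1 - D / (V * T)) * (C * (1 - lam)))
             \<in> rate_region beta0 H D T x p1 p2"
proof -
  define L where "L = T - D / V"
  define tI where "tI = lam * L"
  define tF where "tF = (1 - lam) * L"
  define x where "x = hfh_path (- D / 2) (D / 2) V tI"
  define p1 where "p1 = (\<lambda>t. Pbar * indicator {0..tI} t :: real)"
  define p2 where "p2 = (\<lambda>t. Pbar * indicator {T - tF..T} t :: real)"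
  have "0 < L" "0 < T" using assms unfolding L_def by (auto intro: less_trans[of 0 "D / V"])
  then have "0 \<le> tI" "0 \<le> tF" unfolding tI_def tF_def using assms by auto
  have crossing: "tI + (D / 2 - - D / 2) / V = T - tF"
    unfolding tI_def tF_def L_def using assms by (simp add: field_simps)
  have "tI < T - tF" using assms by (simp flip: crossing)
  have "1 - D / (V * T) = L / T"
    unfolding L_def using \<open>0 < T\<close> assms by (simp add: field_simps)
  then have "((1 - D / (V * T)) * (C * lam), (1 - D / (V * T)) * (C * (1 - lam)))
      = (1 / T * (C * tI), 1 / T * (C * tF))"
    unfolding tI_def tF_def by simp
  also have "\<dots> \<in> rate_region beta0 H D T x p1 p2"
    unfolding C_def p1_def p2_def x_def
  proof (rule hover_tdma_rates)
    show "hfh_path (- D / 2) (D / 2) V tI t = gu_pos D 1" if "t \<le> tI" for t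
      unfolding gu_pos_def using hfh_path_before that assms by simp
    show "hfh_path (- D / 2) (D / 2) V tI t = gu_pos D 2" if "T - tF \<le> t" for t
      unfolding gu_pos_def using hfh_path_after[of V "- D / 2" "D / 2" tI t] that assms crossing
      by simp
  qed (use assms \<open>0 \<le> tI\<close> \<open>tI < T - tF\<close> \<open>0 \<le> tF\<close> in auto)
  finally have "((1 - D / (V * T)) * (C * lam), (1 - D / (V * T)) * (C * (1 - lam)))
      \<in> rate_region beta0 H D T x p1 p2" .
  moreover have "is_HFH D V T (- D / 2) (D / 2) tI tF x"
    unfolding x_def using assms \<open>0 \<le> tI\<close> \<open>0 \<le> tF\<close> crossing
    by (intro is_HFH_hfh_path) auto
  moreover have "feasible_traj V T x"
    unfolding x_def using assms by (intro feasible_traj_hfh_path) auto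
  moreover have "{0..tI} \<inter> {T - tF..T} = {}" using \<open>tI < T - tF\<close> by auto
  then have "feasible_power Pbar T p1 p2" "is_TDMA Pbar T p1 p2"
    unfolding p1_def p2_def using assms
    by (auto intro: feasible_power_indicator_schedule is_TDMA_indicator_schedule)
  ultimately show ?thesis by blast
qed

lemma sum_bound_split:
  fixes r1 r2 C :: real
  assumes "0 \<le> r1" "0 \<le> r2" "r1 + r2 \<le> C"
  obtains lam where "0 \<le> lam" "lam \<le> 1" "r1 \<le> C * lam" "r2 \<le> C * (1 - lam)"
proof (cases "C = 0")
  case True
  then show ?thesis using assms that[of 0] by simp
next
  case False
  then have "0 < C" using assms by linarith
  moreover have "C * (1 - r1 / C) = C - r1" using \<open>0 < C\<close> by (simp add: field_simps)
  ultimately show ?thesis using assms that[of "r1 / C"] by simp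
qed

lemma scaled_cap_hat_point_achieved:
  assumes "0 < D" "0 < V" "0 \<le> beta0" "0 \<le> Pbar"
    and "r \<in> cap_hat beta0 H Pbar" "D / V < T"
  shows "(1 - D / (V * T)) *\<^sub>R r \<in> cap_region beta0 H D V T Pbar \<and>
           (\<exists>x p1 p2 tI tF.
              is_HFH D V T (- D / 2) (D / 2) tI tF x \<and> feasible_traj V T x \<and>
              feasible_power Pbar T p1 p2 \<and> is_TDMA Pbar T p1 p2 \<and>
              (1 - D / (V * T)) *\<^sub>R r \<in> rate_region beta0 H D T x p1 p2)"
proof -
  define C where "C = log 2 (1 + Pbar * beta0 / H^2)"
  obtain r1 r2 where r: "r = (r1, r2)" "0 \<le> r1" "0 \<le> r2" and "r1 + r2 \<le> C"
    using assms(5) unfolding cap_hat_def C_def by auto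
  then obtain lam where lam: "0 \<le> lam" "lam \<le> 1" "r1 \<le> C * lam" "r2 \<le> C * (1 - lam)"
    using sum_bound_split by metis
  obtain x p1 p2 tI tF where route: "is_HFH D V T (- D / 2) (D / 2) tI tF x"
    "feasible_traj V T x" "feasible_power Pbar T p1 p2" "is_TDMA Pbar T p1 p2"
    and corner: "((1 - D / (V * T)) * (C * lam), (1 - D / (V * T)) * (C * (1 - lam)))
      \<in> rate_region beta0 H D T x p1 p2"
    using hfh_tdma_rates[of D V beta0 Pbar T lam H] assms lam unfolding C_def by auto
  have "0 \<le> 1 - D / (V * T)"
    using assms by (simp add: field_simps)
  then have "(1 - D / (V * T)) *\<^sub>R r \<in> rate_region beta0 H D T x p1 p2"
    unfolding r using rate_region_mono[OF corner] r lam by (simp add: mult_left_mono)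
  then show ?thesis
    using route unfolding cap_region_def by blast
qed

lemma cap_hat_approached_by_hfh_tdma:
  assumes "0 < D" "0 < V" "0 \<le> beta0" "0 \<le> Pbar" "r \<in> cap_hat beta0 H Pbar"
  shows "\<exists>rT :: real \<Rightarrow> real \<times> real.
           (rT \<longlongrightarrow> r) at_top \<and>
           (\<forall>\<^sub>F T in at_top. rT T \<in> cap_region beta0 H D V T Pbar \<and>
              (\<exists>x p1 p2 tI tF.
                 is_HFH D V T (- D / 2) (D / 2) tI tF x \<and> feasible_traj V T x \<and>
                 feasible_power Pbar T p1 p2 \<and> is_TDMA Pbar T p1 p2 \<and>
                 rT T \<in> rate_region beta0 H D T x p1 p2))"
proof (intro exI conjI)
  have "((\<lambda>T. D / V * inverse T) \<longlongrightarrow> 0) at_top"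
    by (intro tendsto_mult_right_zero tendsto_inverse_0_at_top filterlim_ident)
  then have "((\<lambda>T. 1 - D / (V * T)) \<longlongrightarrow> 1) at_top"
    using tendsto_diff[OF tendsto_const, of _ 0 at_top 1] by (simp add: field_simps)
  then show "((\<lambda>T. (1 - D / (V * T)) *\<^sub>R r) \<longlongrightarrow> r) at_top"
    using tendsto_scaleR[OF _ tendsto_const] by fastforce
qed (rule eventually_mono[OF eventually_gt_at_top[of "D / V"]],
     rule scaled_cap_hat_point_achieved[OF assms])

theorem theorem1:
  fixes D H beta0 Pbar V :: real
  assumes "D > 0" and "H > 0" and "beta0 > 0" and "Pbar > 0" and "V > 0"
  shows "(\<forall>T>0. cap_region beta0 H D V T Pbar \<subseteq> cap_hat beta0 H Pbar)
     \<and> (\<forall>r\<in>cap_hat beta0 H Pbar.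
          \<exists>rT :: real \<Rightarrow> real \<times> real.
            (rT \<longlongrightarrow> r) at_top \<and>
            (\<forall>\<^sub>F T in at_top. rT T \<in> cap_region beta0 H D V T Pbar \<and>
               (\<exists>x p1 p2 tI tF.
                  is_HFH D V T (- D / 2) (D / 2) tI tF x \<and> feasible_traj V T x \<and>
                  feasible_power Pbar T p1 p2 \<and> is_TDMA Pbar T p1 p2 \<and>
                  rT T \<in> rate_region beta0 H D T x p1 p2)))"
proof (intro conjI allI impI ballI)
  show "cap_region beta0 H D V T Pbar \<subseteq> cap_hat beta0 H Pbar" if "0 < T" for T
    using that assms by (intro cap_region_subset_cap_hat) auto
qed (rule cap_hat_approached_by_hfh_tdma; use assms in simp)

end
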